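(* Fix any ordering $e_1,\dots,e_n$ of $V$. Let $D\subseteq V$ be a dense set and let $\mathcal O$ be a set with $|\mathcal O|\le k$ and $f(\mathcal O)=\mathrm{OPT}$. Suppose that (1) $|D_L|\le0.95\,\eta k$, (2) $f(D_L)\ge0.85\,f(D)$, (3) $|\mathcal O_R|\le0.15\,k$, and (4) $f(\mathcal O_R\mid D)\ge0.05\,f(\mathcal O\mid D)$. Then the output $S$ of Algorithm 1 on this stream satisfies $f(S)\ge0.50025\cdot\mathrm{OPT}$.
   Context: $V$ is a finite ground set with $|V|=n$; $f:2^V\to\mathbb{R}_{\ge0}$ is monotone, submodular and normalized ($f(\emptyset)=0$); $f(X\mid Y)=f(X\cup Y)-f(Y)$, $f(e\mid Y)=f(\{e\}\mid Y)$. $k\le n$ is a positive integer and $\mathrm{OPT}=\max\{f(S):S\subseteq V,|S|\le k\}$. A set $D$ is dense if $|D|\le\eta k$ and $f(D)\ge\frac{1-\gamma}{2}\mathrm{OPT}$, where $\gamma=10^{-2}$, $\eta=5\cdot10^{-5}$. For $T\subseteq V$, $T_L$ is the set of elements of $T$ at positions $i\le0.9n$ and $T_R=T\setminus T_L$. Algorithm 1 (knows $\mathrm{OPT}$): start with $S=\emptyset$; for $i=1,\dots,n$, add $e_i$ to $S$ if $|S|<k$ and either ($i\le 0.9n$ and $f(e_i\mid S)\ge\frac{100}{k}\mathrm{OPT}$) or ($i>0.9n$ and $f(e_i\mid S)\ge\frac{1}{10k}\mathrm{OPT}$); return $S$. *)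

theory Defs
  imports Complex_Main
begin

definition monotone_sf :: "'a set \<Rightarrow> ('a set \<Rightarrow> real) \<Rightarrow> bool" where
  "monotone_sf V f \<longleftrightarrow> (\<forall>A B. A \<subseteq> B \<and> B \<subseteq> V \<longrightarrow> f A \<le> f B)"

definition submodular :: "'a set \<Rightarrow> ('a set \<Rightarrow> real) \<Rightarrow> bool" where
  "submodular V f \<longleftrightarrow> (\<forall>A B. A \<subseteq> V \<and> B \<subseteq> V \<longrightarrow> f (A \<union> B) + f (A \<inter> B) \<le> f A + f B)"

definition normalized_nonneg :: "'a set \<Rightarrow> ('a set \<Rightarrow> real) \<Rightarrow> bool" where
  "normalized_nonneg V f \<longleftrightarrow> f {} = 0 \<and> (\<forall>A. A \<subseteq> V \<longrightarrow> 0 \<le> f A)"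

definition marg :: "('a set \<Rightarrow> real) \<Rightarrow> 'a set \<Rightarrow> 'a set \<Rightarrow> real" where
  "marg f X Y = f (X \<union> Y) - f Y"

definition OPT :: "'a set \<Rightarrow> ('a set \<Rightarrow> real) \<Rightarrow> nat \<Rightarrow> real" where
  "OPT V f k = Max {f S | S. S \<subseteq> V \<and> card S \<le> k}"

definition gamma :: real where "gamma = 1/100"
definition eta :: real where "eta = 5 / 100000"

definition dense :: "'a set \<Rightarrow> ('a set \<Rightarrow> real) \<Rightarrow> nat \<Rightarrow> 'a set \<Rightarrow> bool" where
  "dense V f k D \<longleftrightarrow> D \<subseteq> V \<and> real (card D) \<le> eta * real k
      \<and> f D \<ge> (1 - gamma) / 2 * OPT V f k"

text \<open>Stream given by a list es = [e_1,...,e_n] of distinct elements.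
  Element es ! (i-1) is at position i (1-based). Left part: positions i \<le> 0.9 n.\<close>

definition left_part :: "'a list \<Rightarrow> 'a set \<Rightarrow> 'a set" where
  "left_part es T = {x \<in> T. \<exists>i. 1 \<le> i \<and> i \<le> length es \<and> es ! (i - 1) = x
                                \<and> real i \<le> 9/10 * real (length es)}"

definition right_part :: "'a list \<Rightarrow> 'a set \<Rightarrow> 'a set" where
  "right_part es T = T - left_part es T"

definition alg1_step :: "('a set \<Rightarrow> real) \<Rightarrow> nat \<Rightarrow> real \<Rightarrow> nat \<Rightarrow> nat \<Rightarrow> 'a \<Rightarrow> 'a set \<Rightarrow> 'a set" where
  "alg1_step f k opt n i e S =
     (if card S < k \<and>
         ((real i \<le> 9/10 * real n \<and> marg f {e} S \<ge> 100 / real k * opt) \<or>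
          (real i > 9/10 * real n \<and> marg f {e} S \<ge> 1 / (10 * real k) * opt))
      then insert e S else S)"

fun alg1_run :: "('a set \<Rightarrow> real) \<Rightarrow> nat \<Rightarrow> real \<Rightarrow> 'a list \<Rightarrow> nat \<Rightarrow> 'a set" where
  "alg1_run f k opt es 0 = {}"
| "alg1_run f k opt es (Suc m) =
     alg1_step f k opt (length es) (Suc m) (es ! m) (alg1_run f k opt es m)"

definition algorithm1 :: "('a set \<Rightarrow> real) \<Rightarrow> nat \<Rightarrow> real \<Rightarrow> 'a list \<Rightarrow> 'a set" where
  "algorithm1 f k opt es = alg1_run f k opt es (length es)"

end

theory Submission
  imports Defs
begin

(* Up to position 0.9 n the threshold 100 OPT / k is so high that the partial solution S_L has
   at most k / 100 elements, and every element of D_L it rejected had marginal gain below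
   100 OPT / k; as |D_L| is tiny, f(S_L) is nearly f(D_L) >= 0.85 f(D).  If the algorithm fills
   all k slots, the at least 0.99 k elements accepted afterwards add OPT / (10 k) each, i.e.
   0.099 OPT.  Otherwise every rejected element of the last tenth had marginal gain below
   OPT / (10 k) against S, so S is nearly as good as D_L \<union> D_R \<union> O_R, whose value is
   at least f(D) + 0.05 (OPT - f(D)) by (4). *)

lemma monotone_sfD: "monotone_sf V f \<Longrightarrow> A \<subseteq> B \<Longrightarrow> B \<subseteq> V \<Longrightarrow> f A \<le> f B"
  unfolding monotone_sf_def by blast

lemma marg_singleton_antimono:
  assumes sub: "submodular V f" and mono: "monotone_sf V f"
    and AB: "A \<subseteq> B" "B \<subseteq> V" and x: "x \<in> V"
  shows "marg f {x} B \<le> marg f {x} A"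
proof (cases "x \<in> B")
  case True
  have "f A \<le> f (insert x A)"
    using AB x by (intro monotone_sfD[OF mono]) auto
  then show ?thesis using True by (simp add: marg_def insert_absorb)
next
  case False
  have "insert x A \<subseteq> V" using AB x by blast
  then have "f (insert x A \<union> B) + f (insert x A \<inter> B) \<le> f (insert x A) + f B"
    using sub AB(2) unfolding submodular_def by blast
  moreover have "insert x A \<union> B = insert x B" "insert x A \<inter> B = A"
    using AB(1) False by auto
  ultimately show ?thesis by (simp add: marg_def)
qed

lemma marg_le_sum_singletons:
  assumes sub: "submodular V f" and mono: "monotone_sf V f"
    and "finite X" "X \<subseteq> V" "S \<subseteq> V"
  shows "marg f X S \<le> (\<Sum>x\<in>X. marg f {x} S)"
  using assms(3,4)
proof (induction X rule: finite_induct)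
  case empty
  then show ?case by (simp add: marg_def)
next
  case (insert x X)
  have "marg f {x} (X \<union> S) \<le> marg f {x} S"
    using marg_singleton_antimono[OF sub mono, of S "X \<union> S" x] insert.prems assms(5) by auto
  moreover have "marg f (insert x X) S = marg f {x} (X \<union> S) + marg f X S"
    by (simp add: marg_def)
  ultimately show ?case using insert by simp
qed

lemma marg_Un_le:
  assumes sub: "submodular V f" and mono: "monotone_sf V f"
    and "A \<subseteq> V" "B \<subseteq> V" "S \<subseteq> V"
  shows "marg f (A \<union> B) S \<le> marg f A S + marg f B S"
proof -
  have "f ((A \<union> S) \<union> (B \<union> S)) + f ((A \<union> S) \<inter> (B \<union> S)) \<le> f (A \<union> S) + f (B \<union> S)"
    using sub assms unfolding submodular_def by auto
  moreover have "f S \<le> f ((A \<union> S) \<inter> (B \<union> S))"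
    using assms(3-5) by (intro monotone_sfD[OF mono]) auto
  moreover have "(A \<union> S) \<union> (B \<union> S) = A \<union> B \<union> S" by auto
  ultimately show ?thesis by (simp add: marg_def)
qed

lemma f_le_OPT:
  assumes "finite V" "X \<subseteq> V" "card X \<le> k"
  shows "f X \<le> OPT V f k"
proof -
  have "finite (f ` {S. S \<subseteq> V \<and> card S \<le> k})" using assms(1) by simp
  moreover have "{f S | S. S \<subseteq> V \<and> card S \<le> k} = f ` {S. S \<subseteq> V \<and> card S \<le> k}" by auto
  ultimately show ?thesis unfolding OPT_def using assms by (intro Max_ge) auto
qed

definition left_len :: "nat \<Rightarrow> nat" where
  "left_len n = nat \<lfloor>9/10 * real n\<rfloor>"

lemma le_left_len_iff: "i \<le> left_len n \<longleftrightarrow> real i \<le> 9/10 * real n"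
proof -
  have "i \<le> left_len n \<longleftrightarrow> int i \<le> \<lfloor>9/10 * real n\<rfloor>"
    unfolding left_len_def by (simp add: le_nat_iff)
  also have "\<dots> \<longleftrightarrow> real i \<le> 9/10 * real n"
    by (simp only: le_floor_iff) simp
  finally show ?thesis .
qed

lemma left_len_le: "left_len n \<le> n"
  unfolding left_len_def by (simp add: nat_le_iff floor_le_iff)

lemma left_part_iff:
  "x \<in> left_part es T \<longleftrightarrow>
     x \<in> T \<and> (\<exists>j < length es. es ! j = x \<and> Suc j \<le> left_len (length es))"
proof -
  have "(\<exists>i. 1 \<le> i \<and> i \<le> length es \<and> es ! (i - 1) = x \<and> i \<le> left_len (length es))
    \<longleftrightarrow> (\<exists>j < length es. es ! j = x \<and> Suc j \<le> left_len (length es))"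
  proof
    assume "\<exists>i. 1 \<le> i \<and> i \<le> length es \<and> es ! (i - 1) = x \<and> i \<le> left_len (length es)"
    then obtain i where "1 \<le> i" "i \<le> length es" "es ! (i - 1) = x" "i \<le> left_len (length es)"
      by blast
    then show "\<exists>j < length es. es ! j = x \<and> Suc j \<le> left_len (length es)"
      by (intro exI[of _ "i - 1"]) auto
  next
    assume "\<exists>j < length es. es ! j = x \<and> Suc j \<le> left_len (length es)"
    then obtain j where "j < length es" "es ! j = x" "Suc j \<le> left_len (length es)"
      by blast
    then show "\<exists>i. 1 \<le> i \<and> i \<le> length es \<and> es ! (i - 1) = x \<and> i \<le> left_len (length es)"
      by (intro exI[of _ "Suc j"]) auto
  qed
  then show ?thesis unfolding left_part_def le_left_len_iff[symmetric] by blast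
qed

lemma right_part_iff:
  "x \<in> right_part es T \<longleftrightarrow>
     x \<in> T \<and> (\<forall>j < length es. es ! j = x \<longrightarrow> left_len (length es) < Suc j)"
  by (auto simp: right_part_def left_part_iff not_le)

lemma right_part_Un: "right_part es (A \<union> B) = right_part es A \<union> right_part es B"
  by (auto simp: right_part_iff)

definition alg1_threshold :: "nat \<Rightarrow> real \<Rightarrow> nat \<Rightarrow> nat \<Rightarrow> real" where
  "alg1_threshold k opt n i =
     (if i \<le> left_len n then 100 / real k * opt else 1 / (10 * real k) * opt)"

lemma alg1_step_eq:
  "alg1_step f k opt n i e S =
     (if card S < k \<and> alg1_threshold k opt n i \<le> marg f {e} S then insert e S else S)"
  unfolding alg1_step_def alg1_threshold_def le_left_len_iff by auto

lemma finite_alg1_run: "finite (alg1_run f k opt es m)"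
  by (induction m) (simp_all add: alg1_step_def)

lemma card_alg1_run_le: "card (alg1_run f k opt es m) \<le> k"
  by (induction m) (auto simp: alg1_step_def card_insert_if finite_alg1_run)

lemma alg1_run_subset: "m \<le> length es \<Longrightarrow> alg1_run f k opt es m \<subseteq> set es"
  by (induction m) (auto simp: alg1_step_def)

lemma alg1_run_mono: "m \<le> m' \<Longrightarrow> alg1_run f k opt es m \<subseteq> alg1_run f k opt es m'"
proof (induction m' rule: dec_induct)
  case (step m')
  then show ?case by (auto simp: alg1_step_def)
qed simp

lemma alg1_run_Suc_gain:
  assumes "0 \<le> \<tau>" "\<tau> \<le> alg1_threshold k opt (length es) (Suc j)"
  shows "\<tau> * (real (card (alg1_run f k opt es (Suc j))) - real (card (alg1_run f k opt es j)))
    \<le> f (alg1_run f k opt es (Suc j)) - f (alg1_run f k opt es j)"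
proof -
  let ?S = "alg1_run f k opt es j" and ?e = "es ! j"
  show ?thesis
  proof (cases "card ?S < k \<and> alg1_threshold k opt (length es) (Suc j) \<le> marg f {?e} ?S")
    case True
    have "real (card (insert ?e ?S)) - real (card ?S) \<le> 1"
      by (simp add: card_insert_if finite_alg1_run)
    then have "\<tau> * (real (card (insert ?e ?S)) - real (card ?S)) \<le> \<tau>"
      using assms(1) by (simp add: mult_left_le)
    also have "\<dots> \<le> f (insert ?e ?S) - f ?S"
      using True assms(2) by (simp add: marg_def)
    finally show ?thesis using True by (simp add: alg1_step_eq)
  next
    case False
    then show ?thesis by (auto simp: alg1_step_eq)
  qed
qed

lemma alg1_run_gain:
  assumes "0 \<le> \<tau>" "m \<le> m'"
    and "\<And>j. m \<le> j \<Longrightarrow> j < m' \<Longrightarrow> \<tau> \<le> alg1_threshold k opt (length es) (Suc j)"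
  shows "f (alg1_run f k opt es m)
      + \<tau> * (real (card (alg1_run f k opt es m')) - real (card (alg1_run f k opt es m)))
    \<le> f (alg1_run f k opt es m')"
  using assms(2,3)
proof (induction m' rule: dec_induct)
  case (step j)
  have "\<tau> \<le> alg1_threshold k opt (length es) (Suc j)"
    using step by simp
  then have "\<tau> * (real (card (alg1_run f k opt es (Suc j))) - real (card (alg1_run f k opt es j)))
    \<le> f (alg1_run f k opt es (Suc j)) - f (alg1_run f k opt es j)"
    by (rule alg1_run_Suc_gain[OF assms(1)])
  then show ?case using step by (simp add: right_diff_distrib)
qed simp

lemma alg1_run_Suc_rejected:
  assumes "es ! j \<notin> alg1_run f k opt es (Suc j)" "card (alg1_run f k opt es j) < k"
  shows "marg f {es ! j} (alg1_run f k opt es j) < alg1_threshold k opt (length es) (Suc j)"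
  using assms by (auto simp: alg1_step_eq split: if_splits)

locale algorithm1_stream =
  fixes V :: "'a set" and f :: "'a set \<Rightarrow> real" and k :: nat and es :: "'a list"
  assumes mono: "monotone_sf V f" and sub: "submodular V f" and nn: "normalized_nonneg V f"
    and k_pos: "0 < k" and set_es: "set es = V"
begin

abbreviation opt :: real where "opt \<equiv> OPT V f k"
abbreviation run :: "nat \<Rightarrow> 'a set" where "run \<equiv> alg1_run f k opt es"
abbreviation run_left :: "'a set" where "run_left \<equiv> run (left_len (length es))"
abbreviation result :: "'a set" where "result \<equiv> algorithm1 f k opt es"

lemma result_eq_run: "result = run (length es)"
  unfolding algorithm1_def ..

lemma run_subset: "m \<le> length es \<Longrightarrow> run m \<subseteq> V"
  using alg1_run_subset set_es by blast

lemma run_left_subset_result: "run_left \<subseteq> result"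
  unfolding result_eq_run by (rule alg1_run_mono[OF left_len_le])

lemma opt_nonneg: "0 \<le> opt"
  using f_le_OPT[of V "{}" k f] nn set_es unfolding normalized_nonneg_def by auto

lemma card_run_left_le:
  assumes "0 < opt"
  shows "100 * card run_left \<le> k"
proof -
  have "f (run 0) + 100 / real k * opt * (real (card run_left) - real (card (run 0)))
    \<le> f run_left"
    by (rule alg1_run_gain) (auto simp: alg1_threshold_def opt_nonneg)
  then have "100 / real k * opt * real (card run_left) \<le> f run_left"
    using nn by (simp add: normalized_nonneg_def)
  also have "\<dots> \<le> opt"
    using set_es by (intro f_le_OPT) (auto simp: run_subset left_len_le card_alg1_run_le)
  finally have "opt * (100 * real (card run_left)) \<le> opt * real k"
    using k_pos by (simp add: field_simps)
  then show ?thesis using assms by (simp add: mult_le_cancel_left_pos)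
qed

lemma result_gain:
  "f run_left + 1 / (10 * real k) * opt * (real (card result) - real (card run_left))
    \<le> f result"
  unfolding result_eq_run
  by (rule alg1_run_gain) (auto simp: alg1_threshold_def opt_nonneg left_len_le)

lemma marg_rejected_lt:
  assumes "j < length es" "es ! j \<notin> T" "run (Suc j) \<subseteq> T" "T \<subseteq> V" "card (run j) < k"
  shows "marg f {es ! j} T < alg1_threshold k opt (length es) (Suc j)"
proof -
  have "marg f {es ! j} T \<le> marg f {es ! j} (run j)"
  proof (rule marg_singleton_antimono[OF sub mono])
    have "run j \<subseteq> run (Suc j)" by (rule alg1_run_mono) simp
    then show "run j \<subseteq> T" using assms(3) by (rule subset_trans)
    show "es ! j \<in> V" using assms(1) set_es by auto
  qed fact
  also have "\<dots> < alg1_threshold k opt (length es) (Suc j)"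
    using alg1_run_Suc_rejected assms(2,3,5) by blast
  finally show ?thesis .
qed

lemma marg_rejected_set_le:
  assumes "Y \<subseteq> V" "T \<subseteq> V" "0 \<le> c"
    and rejected: "\<And>x. x \<in> Y \<Longrightarrow> x \<notin> T \<Longrightarrow> \<exists>j < length es. es ! j = x
      \<and> run (Suc j) \<subseteq> T \<and> card (run j) < k \<and> alg1_threshold k opt (length es) (Suc j) \<le> c"
  shows "marg f Y T \<le> real (card Y) * c"
proof -
  have fin: "finite Y" using assms(1) set_es finite_subset by blast
  have "marg f {x} T \<le> c" if x: "x \<in> Y" for x
  proof (cases "x \<in> T")
    case True
    then show ?thesis using assms(3) by (simp add: marg_def insert_absorb)
  next
    case False
    then obtain j where j: "j < length es" "es ! j = x" "run (Suc j) \<subseteq> T" "card (run j) < k"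
      and threshold: "alg1_threshold k opt (length es) (Suc j) \<le> c"
      using rejected x by blast
    then have "marg f {es ! j} T < alg1_threshold k opt (length es) (Suc j)"
      using False assms(2) by (intro marg_rejected_lt) auto
    then show ?thesis using j(2) threshold by simp
  qed
  then have "(\<Sum>x\<in>Y. marg f {x} T) \<le> real (card Y) * c"
    by (rule sum_bounded_above)
  then show ?thesis using marg_le_sum_singletons[OF sub mono fin assms(1,2)] by linarith
qed

lemma marg_left_part_le:
  assumes "real (card (left_part es Y)) \<le> a * real k" "0 < opt" "run_left \<subseteq> T" "T \<subseteq> V"
  shows "marg f (left_part es Y) T \<le> 100 * a * opt"
proof -
  have room: "card run_left < k" using card_run_left_le[OF assms(2)] k_pos by linarith
  have "marg f (left_part es Y) T \<le> real (card (left_part es Y)) * (100 / real k * opt)"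
  proof (rule marg_rejected_set_le)
    show "left_part es Y \<subseteq> V" using set_es by (auto simp: left_part_iff)
    fix x assume "x \<in> left_part es Y"
    then obtain j where j: "j < length es" "es ! j = x" "Suc j \<le> left_len (length es)"
      by (auto simp: left_part_iff)
    have "run j \<subseteq> run_left" "run (Suc j) \<subseteq> run_left"
      by (rule alg1_run_mono, use j in simp)+
    then have "card (run j) \<le> card run_left" "run (Suc j) \<subseteq> T"
      using assms(3) by (simp_all add: card_mono[OF finite_alg1_run])
    then have "card (run j) < k" "run (Suc j) \<subseteq> T"
      using room by simp_all
    then show "\<exists>j < length es. es ! j = x \<and> run (Suc j) \<subseteq> T \<and> card (run j) < k
      \<and> alg1_threshold k opt (length es) (Suc j) \<le> 100 / real k * opt"
      using j by (auto simp: alg1_threshold_def)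
  qed (use assms(4) opt_nonneg in auto)
  also have "\<dots> \<le> a * real k * (100 / real k * opt)"
    using assms(1) opt_nonneg by (intro mult_right_mono) auto
  also have "\<dots> = 100 * a * opt"
    using k_pos by simp
  finally show ?thesis .
qed

lemma marg_right_part_le:
  assumes "Y \<subseteq> V" "real (card (right_part es Y)) \<le> b * real k" "card result < k"
  shows "marg f (right_part es Y) result \<le> b / 10 * opt"
proof -
  have "marg f (right_part es Y) result \<le> real (card (right_part es Y)) * (1 / (10 * real k) * opt)"
  proof (rule marg_rejected_set_le)
    show "right_part es Y \<subseteq> V" "result \<subseteq> V"
      using assms(1) run_subset[of "length es"] by (auto simp: right_part_def result_eq_run)
    fix x assume x: "x \<in> right_part es Y"
    have "x \<in> set es" using x assms(1) set_es by (auto simp: right_part_def)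
    then obtain j where j: "j < length es" "es ! j = x"
      by (auto simp: in_set_conv_nth)
    then have "left_len (length es) < Suc j"
      using x by (simp add: right_part_iff)
    moreover have "run j \<subseteq> result" "run (Suc j) \<subseteq> result"
      unfolding result_eq_run by (rule alg1_run_mono, use j in simp)+
    then have "card (run j) \<le> card result"
      by (intro card_mono) (simp_all add: result_eq_run finite_alg1_run)
    then have "card (run j) < k"
      using assms(3) by simp
    ultimately show "\<exists>j < length es. es ! j = x \<and> run (Suc j) \<subseteq> result \<and> card (run j) < k
      \<and> alg1_threshold k opt (length es) (Suc j) \<le> 1 / (10 * real k) * opt"
      using j \<open>run (Suc j) \<subseteq> result\<close> by (auto simp: alg1_threshold_def)
  qed (use opt_nonneg in auto)
  also have "\<dots> \<le> b * real k * (1 / (10 * real k) * opt)"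
    using assms(2) opt_nonneg by (intro mult_right_mono) auto
  also have "\<dots> = b / 10 * opt"
    using k_pos by simp
  finally show ?thesis .
qed

lemma result_value_if_full:
  assumes "dense V f k D"
    and "real (card (left_part es D)) \<le> 0.95 * eta * real k"
    and "f (left_part es D) \<ge> 0.85 * f D"
    and "0 < opt" "card result = k"
  shows "f result \<ge> 0.50025 * opt"
proof -
  let ?DL = "left_part es D"
  have DV: "D \<subseteq> V" and fD: "f D \<ge> (1 - gamma) / 2 * opt"
    using assms(1) by (auto simp: dense_def)
  have "real (100 * card run_left) \<le> real k"
    using card_run_left_le[OF assms(4)] by (simp only: of_nat_le_iff)
  then have "1 / (10 * real k) * opt * (0.99 * real k)
      \<le> 1 / (10 * real k) * opt * (real (card result) - real (card run_left))"
    using assms(5) opt_nonneg by (intro mult_left_mono) auto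
  then have gain: "f run_left + 0.099 * opt \<le> f result"
    using result_gain k_pos by simp
  have "?DL \<union> run_left \<subseteq> V"
    using DV run_subset[OF left_len_le] by (auto simp: left_part_def)
  then have "f ?DL \<le> f (?DL \<union> run_left)"
    by (intro monotone_sfD[OF mono]) auto
  moreover have "marg f ?DL run_left \<le> 100 * (0.95 * eta) * opt"
    using marg_left_part_le[OF assms(2,4)] run_subset[OF left_len_le] by blast
  ultimately show ?thesis
    using gain assms(3) fD opt_nonneg unfolding marg_def gamma_def eta_def
    by (simp add: field_simps)
qed

lemma result_value_if_not_full:
  assumes "dense V f k D" and "Ostar \<subseteq> V" "f Ostar = opt"
    and "real (card (left_part es D)) \<le> 0.95 * eta * real k"
    and "real (card (right_part es Ostar)) \<le> 0.15 * real k"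
    and "marg f (right_part es Ostar) D \<ge> 0.05 * marg f Ostar D"
    and "0 < opt" "card result < k"
  shows "f result \<ge> 0.50025 * opt"
proof -
  let ?DL = "left_part es D" and ?OR = "right_part es Ostar" and ?X = "right_part es (D \<union> Ostar)"
  have DV: "D \<subseteq> V" and fD: "f D \<ge> (1 - gamma) / 2 * opt"
    and cardD: "real (card D) \<le> eta * real k"
    using assms(1) by (auto simp: dense_def)
  have SV: "result \<subseteq> V" and DLV: "?DL \<subseteq> V" and XV: "?X \<subseteq> V"
    using run_subset[of "length es"] DV assms(2)
    by (auto simp: result_eq_run left_part_def right_part_def)
  have "card ?X \<le> card (right_part es D) + card ?OR"
    unfolding right_part_Un by (rule card_Un_le)
  moreover have "card (right_part es D) \<le> card D"
    using DV set_es by (intro card_mono) (auto simp: right_part_def finite_subset)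
  ultimately have "card ?X \<le> card D + card ?OR"
    by linarith
  then have "real (card ?X) \<le> real (card D) + real (card ?OR)"
    by (simp only: of_nat_add[symmetric] of_nat_le_iff)
  then have "real (card ?X) \<le> (eta + 0.15) * real k"
    unfolding distrib_right using cardD assms(5) by linarith
  moreover have "D \<union> Ostar \<subseteq> V"
    using DV assms(2) by blast
  ultimately have "marg f ?X result \<le> (eta + 0.15) / 10 * opt"
    using marg_right_part_le assms(8) by blast
  moreover have "marg f ?DL result \<le> 100 * (0.95 * eta) * opt"
    using marg_left_part_le[OF assms(4,7) run_left_subset_result SV] .
  moreover have "marg f (?DL \<union> ?X) result \<le> marg f ?DL result + marg f ?X result"
    using marg_Un_le[OF sub mono DLV XV SV] .
  moreover have "f (D \<union> ?OR) \<le> f (?DL \<union> ?X \<union> result)"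
    using DLV XV SV unfolding right_part_Un
    by (intro monotone_sfD[OF mono]) (auto simp: right_part_def)
  moreover have "f Ostar \<le> f (Ostar \<union> D)"
    using DV assms(2) by (intro monotone_sfD[OF mono]) auto
  moreover have "f (D \<union> ?OR) = f D + marg f ?OR D"
    by (simp add: marg_def Un_commute)
  ultimately show ?thesis
    using assms(3,6) fD opt_nonneg unfolding marg_def gamma_def eta_def
    by (simp add: field_simps)
qed

end

theorem mainTheorem7:
  fixes V :: "'a set" and f :: "'a set \<Rightarrow> real" and k :: nat
    and es :: "'a list" and D Ostar :: "'a set"
  assumes fin: "finite V"
    and mono: "monotone_sf V f" and sub: "submodular V f" and nn: "normalized_nonneg V f"
    and kpos: "0 < k" and kn: "k \<le> card V"
    and order: "distinct es" "set es = V"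
    and Ddense: "dense V f k D"
    and Osub: "Ostar \<subseteq> V" and Ocard: "card Ostar \<le> k" and Oopt: "f Ostar = OPT V f k"
    and c1: "real (card (left_part es D)) \<le> 0.95 * eta * real k"
    and c2: "f (left_part es D) \<ge> 0.85 * f D"
    and c3: "real (card (right_part es Ostar)) \<le> 0.15 * real k"
    and c4: "marg f (right_part es Ostar) D \<ge> 0.05 * marg f Ostar D"
  shows "f (algorithm1 f k (OPT V f k) es) \<ge> 0.50025 * OPT V f k"
proof -
  \<comment> \<open>finite V follows from set es = V.\<close>
  interpret algorithm1_stream V f k es
    using mono sub nn kpos order(2) by unfold_locales
  have "0 \<le> f result"
    using nn run_subset[of "length es"] by (simp add: result_eq_run normalized_nonneg_def)
  moreover have "card result \<le> k"
    by (simp add: result_eq_run card_alg1_run_le)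
  ultimately consider "opt = 0" | "0 < opt" "card result = k" | "0 < opt" "card result < k"
    using opt_nonneg by linarith
  then show ?thesis
  proof cases
    case 1
    then show ?thesis using \<open>0 \<le> f result\<close> by simp
  next
    case 2
    then show ?thesis using result_value_if_full[OF Ddense c1 c2] by blast
  next
    case 3
    then show ?thesis using result_value_if_not_full[OF Ddense Osub Oopt c1 c3 c4] by blast
  qed
qed

end
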